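(* Let $\rho_{AB}$ be a two-qubit Bell diagonal state, i.e. $\rho_{AB}=p_0|\phi^+\rangle\langle\phi^+|+p_1|\psi^+\rangle\langle\psi^+|+p_2|\psi^-\rangle\langle\psi^-|+p_3|\phi^-\rangle\langle\phi^-|$ with $(p_0,p_1,p_2,p_3)$ a probability vector, where $|\phi^\pm\rangle=(|00\rangle\pm|11\rangle)/\sqrt2$ and $|\psi^\pm\rangle=(|01\rangle\pm|10\rangle)/\sqrt2$. Let $R_{\mu\nu}=\operatorname{Tr}[(\sigma_\mu\otimes\sigma_\nu)\rho_{AB}]$ for $\mu,\nu\in\{0,1,2,3\}$, and let $\lambda_1\le\lambda_2\le\lambda_3$ be the numbers $|R_{11}|,|R_{22}|,|R_{33}|$ arranged in nondecreasing order. Then the one-sided negativity of quantumness of $\rho_{AB}$ on $A$ is $$Q^A_{\mathcal N}(\rho_{AB})=\frac{\lambda_2}{2}.$$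
   Context: $\sigma_0=\mathbb I$, $\sigma_1=\sigma_x$, $\sigma_2=\sigma_y$, $\sigma_3=\sigma_z$ are the identity and Pauli matrices. For a bipartite state $\tau_{X:Y}$, the negativity is $\mathcal N_{X:Y}(\tau)=(\|\tau^{\Gamma}\|_1-1)/2$, where $\tau^\Gamma$ is the partial transpose with respect to one of the parties (in any product basis) and $\|\cdot\|_1$ is the trace norm (sum of singular values). For a finite-dimensional system $A$ of dimension $m$ and an orthonormal basis $\{|a_k\rangle\}_{k=1}^m$ of $A$, the measurement interaction is the isometry $V:A\to A\otimes A'$, with $A'$ an $m$-dimensional system with computational basis $\{|k\rangle\}$, defined by $V|a_k\rangle=|a_k\rangle|k\rangle$. The one-sided negativity of quantumness of a state $\rho_{AB}$ on $A$ is $Q^A_{\mathcal N}(\rho_{AB})=\min\mathcal N_{AB:A'}\big((V\otimes\mathbb I_B)\rho_{AB}(V\otimes\mathbb I_B)^\dagger\big)$, the minimum being over all orthonormal bases of $A$ defining $V$. *)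

theory Defs
  imports "Jordan_Normal_Form.Schur_Decomposition"
begin

definition mtrace :: "complex mat \<Rightarrow> complex" where
  "mtrace A = (\<Sum>i<dim_row A. A $$ (i, i))"

text \<open>Kronecker (tensor) product; index of the product basis |i>|j> is i * dim2 + j.\<close>
definition kron :: "complex mat \<Rightarrow> complex mat \<Rightarrow> complex mat" where
  "kron A B = mat (dim_row A * dim_row B) (dim_col A * dim_col B)
     (\<lambda>(i, j). A $$ (i div dim_row B, j div dim_col B) * B $$ (i mod dim_row B, j mod dim_col B))"

definition ketbra :: "complex vec \<Rightarrow> complex mat" where
  "ketbra v = mat (dim_vec v) (dim_vec v) (\<lambda>(i, j). v $ i * cnj (v $ j))"

text \<open>Singular values of A are the square roots of the eigenvalues of A^dagger A (counted with
  algebraic multiplicity); the trace norm is their sum.\<close>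
definition trace_norm :: "complex mat \<Rightarrow> real" where
  "trace_norm A =
     (let p = char_poly (mat_adjoint A * A)
      in \<Sum>x\<in>{x. poly p x = 0}. real (order x p) * sqrt (Re x))"

text \<open>Partial transpose on the second factor of a system X (dim dX) tensor Y (dim dY).\<close>
definition ptrans2 :: "nat \<Rightarrow> nat \<Rightarrow> complex mat \<Rightarrow> complex mat" where
  "ptrans2 dX dY M = mat (dX * dY) (dX * dY)
     (\<lambda>(i, j). M $$ (dY * (i div dY) + j mod dY, dY * (j div dY) + i mod dY))"

definition negativity :: "nat \<Rightarrow> nat \<Rightarrow> complex mat \<Rightarrow> real" where
  "negativity dX dY \<tau> = (trace_norm (ptrans2 dX dY \<tau>) - 1) / 2"

definition orthonormal_basis :: "nat \<Rightarrow> (nat \<Rightarrow> complex vec) \<Rightarrow> bool" where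
  "orthonormal_basis m a \<longleftrightarrow>
     (\<forall>k<m. a k \<in> carrier_vec m) \<and>
     (\<forall>j<m. \<forall>k<m. a j \<bullet>c a k = (if j = k then 1 else 0))"

text \<open>V : A \<rightarrow> A \<otimes> A', V |a_k> = |a_k>|k>, i.e. V = sum_k (|a_k> \<otimes> |k>) <a_k|.
  Row index of A \<otimes> A' is i * m + k.\<close>
definition meas_iso :: "nat \<Rightarrow> (nat \<Rightarrow> complex vec) \<Rightarrow> complex mat" where
  "meas_iso m a = mat (m * m) m
     (\<lambda>(r, j). a (r mod m) $ (r div m) * cnj (a (r mod m) $ j))"

text \<open>Permutation (unitary) reordering A \<otimes> A' \<otimes> B into A \<otimes> B \<otimes> A'
  (dims m, m, dB).\<close>
definition swap_AprimeB :: "nat \<Rightarrow> nat \<Rightarrow> complex mat" where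
  "swap_AprimeB m dB = mat (m * dB * m) (m * m * dB)
     (\<lambda>(r, c). let a = r div (dB * m); b = (r div m) mod dB; k = r mod m
              in if c = (a * m + k) * dB + b then 1 else 0)"

definition measured_state :: "nat \<Rightarrow> nat \<Rightarrow> (nat \<Rightarrow> complex vec) \<Rightarrow> complex mat \<Rightarrow> complex mat" where
  "measured_state m dB a \<rho> =
     (let W = swap_AprimeB m dB * kron (meas_iso m a) (1\<^sub>m dB)
      in W * \<rho> * mat_adjoint W)"

text \<open>One-sided negativity of quantumness on A (dim m) of rho_AB (B of dim dB):
  infimum (= minimum, by compactness) over orthonormal bases of N_{AB:A'}.\<close>
definition QN_A :: "nat \<Rightarrow> nat \<Rightarrow> complex mat \<Rightarrow> real" where
  "QN_A m dB \<rho> = Inf {negativity (m * dB) m (measured_state m dB a \<rho>) | a. orthonormal_basis m a}"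

definition sigma :: "nat \<Rightarrow> complex mat" where
  "sigma \<mu> = (if \<mu> = 0 then mat_of_rows_list 2 [[1, 0], [0, 1]]
             else if \<mu> = 1 then mat_of_rows_list 2 [[0, 1], [1, 0]]
             else if \<mu> = 2 then mat_of_rows_list 2 [[0, -\<i>], [\<i>, 0]]
             else mat_of_rows_list 2 [[1, 0], [0, -1]])"

text \<open>Two-qubit computational basis index: |ab> has index 2a + b.\<close>
definition phi_plus :: "complex vec" where
  "phi_plus = vec_of_list [1 / sqrt 2, 0, 0, 1 / sqrt 2]"
definition phi_minus :: "complex vec" where
  "phi_minus = vec_of_list [1 / sqrt 2, 0, 0, - 1 / sqrt 2]"
definition psi_plus :: "complex vec" where
  "psi_plus = vec_of_list [0, 1 / sqrt 2, 1 / sqrt 2, 0]"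
definition psi_minus :: "complex vec" where
  "psi_minus = vec_of_list [0, 1 / sqrt 2, - 1 / sqrt 2, 0]"

definition corr :: "complex mat \<Rightarrow> nat \<Rightarrow> nat \<Rightarrow> complex" where
  "corr \<rho> \<mu> \<nu> = mtrace (kron (sigma \<mu>) (sigma \<nu>) * \<rho>)"

end

theory Submission
  imports Defs
begin

text \<open>In the product basis \<open>|a\<^sub>k\<rangle>|b\<rangle>\<close> of \<open>A \<otimes> B\<close>, the partial transpose (on \<open>A'\<close>) of the
  measured state is unitarily equivalent to a matrix whose Gram matrix is block diagonal, with the
  four \<open>2 \<times> 2\<close> blocks \<open>X\<^sub>k\<^sub>l\<^sup>\<dagger> X\<^sub>k\<^sub>l\<close>, \<open>X\<^sub>k\<^sub>l(b, b') = \<langle>a\<^sub>k b|\<rho>|a\<^sub>l b'\<rangle>\<close>. Hence its trace norm is the sum of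
  the trace norms \<open>(\<parallel>X\<parallel>\<^sub>F\<^sup>2 + 2 |det X|)\<^sup>1\<^sup>/\<^sup>2\<close> of these blocks. For a Bell diagonal state the two
  diagonal blocks contribute \<open>1/2\<close> each, so the negativity equals the trace norm of an off-diagonal
  block, which is \<open>(\<Sum>\<^sub>i c\<^sub>i\<^sup>2 |v\<^sub>i|\<^sup>2 + |\<Sum>\<^sub>i c\<^sub>i\<^sup>2 v\<^sub>i\<^sup>2|)\<^sup>1\<^sup>/\<^sup>2 / (2\<surd>2)\<close> with \<open>c\<^sub>i = R\<^sub>i\<^sub>i\<close> and
  \<open>v\<^sub>i = \<langle>a\<^sub>0|\<sigma>\<^sub>i|a\<^sub>1\<rangle>\<close>. Since \<open>\<Sum> |v\<^sub>i|\<^sup>2 = 2\<close> and \<open>\<Sum> v\<^sub>i\<^sup>2 = 0\<close>, subtracting the median \<open>\<lambda>\<^sub>2\<^sup>2\<close> from every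
  \<open>c\<^sub>i\<^sup>2\<close> shows that this is at least \<open>\<lambda>\<^sub>2/2\<close>; the eigenbases of \<open>\<sigma>\<^sub>z\<close>, \<open>\<sigma>\<^sub>x\<close>, \<open>\<sigma>\<^sub>y\<close> give the
  maxima of two of the \<open>|c\<^sub>i|\<close>, the least of which is \<open>\<lambda>\<^sub>2\<close>.\<close>

lemma sum_0_upto_2: "sum f {0..<2::nat} = f 0 + f 1"
  by (simp add: eval_nat_numeral)

lemma sum_0_upto_4: "sum f {0..<4::nat} = f 0 + f 1 + f 2 + f 3"
  by (simp add: eval_nat_numeral)

lemma sum_0_upto_8: "sum f {0..<8::nat} = f 0 + f 1 + f 2 + f 3 + f 4 + f 5 + f 6 + f 7"
  by (simp add: eval_nat_numeral)

lemma mat_adjoint_eq_mat: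
  "mat_adjoint (A :: complex mat) = mat (dim_col A) (dim_row A) (\<lambda>(i, j). cnj (A $$ (j, i)))"
  by (rule eq_matI) (auto simp: mat_adjoint_def mat_of_rows_def)

lemma mat_adjoint_index [simp]:
  "i < dim_col A \<Longrightarrow> j < dim_row A \<Longrightarrow> mat_adjoint (A :: complex mat) $$ (i, j) = cnj (A $$ (j, i))"
  "dim_row (mat_adjoint A) = dim_col A" "dim_col (mat_adjoint A) = dim_row A"
  by (auto simp: mat_adjoint_eq_mat)

lemma mat_adjoint_carrier [simp]: "A \<in> carrier_mat n m \<Longrightarrow> mat_adjoint (A :: complex mat) \<in> carrier_mat m n"
  by (auto simp: mat_adjoint_eq_mat)

lemma mat_adjoint_adjoint [simp]: "mat_adjoint (mat_adjoint (A :: complex mat)) = A"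
  by (rule eq_matI) auto

lemma mat_adjoint_mult:
  assumes "(A :: complex mat) \<in> carrier_mat n m" "B \<in> carrier_mat m k"
  shows "mat_adjoint (A * B) = mat_adjoint B * mat_adjoint A"
  by (rule eq_matI) (use assms in \<open>auto simp: scalar_prod_def cnj_sum mult.commute\<close>)

lemma mult_sandwich:
  assumes "A \<in> carrier_mat n n" "B \<in> carrier_mat n n" "P \<in> carrier_mat n n" "Q \<in> carrier_mat n n"
    and "Q * P = 1\<^sub>m n"
  shows "(P * A * Q) * (P * B * Q) = P * (A * B) * (Q :: 'a :: comm_ring_1 mat)"
proof -
  have QP: "Q * (P * X) = X" if X: "X \<in> carrier_mat n n" for X
  proof -
    have "Q * (P * X) = (Q * P) * X" by (rule assoc_mult_mat[symmetric]) (use assms X in auto)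
    then show ?thesis using assms X by simp
  qed
  show ?thesis using assms by (simp add: assoc_mult_mat[of _ n n _ n _ n] QP)
qed

lemma det_2x2:
  assumes A: "(A :: 'a :: comm_ring_1 mat) \<in> carrier_mat 2 2"
  shows "det A = A $$ (0, 0) * A $$ (1, 1) - A $$ (0, 1) * A $$ (1, 0)"
proof -
  have "det A = (\<Sum>i<2. A $$ (i, 0) * cofactor A i 0)"
    by (rule laplace_expansion_column[OF A]) auto
  also have "\<dots> = A $$ (0, 0) * det (mat_delete A 0 0) - A $$ (1, 0) * det (mat_delete A 1 0)"
    by (simp add: cofactor_def numeral_2_eq_2)
  also have "det (mat_delete A 0 0) = A $$ (1, 1)"
    by (subst det_single) (use A in \<open>auto simp: mat_delete_def\<close>)
  also have "det (mat_delete A 1 0) = A $$ (0, 1)"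
    by (subst det_single) (use A in \<open>auto simp: mat_delete_def\<close>)
  finally show ?thesis by (simp add: algebra_simps)
qed

lemma char_poly_2x2:
  assumes A: "(A :: 'a :: comm_ring_1 mat) \<in> carrier_mat 2 2"
  shows "char_poly A = [: A $$ (0, 0) * A $$ (1, 1) - A $$ (0, 1) * A $$ (1, 0), - (A $$ (0, 0) + A $$ (1, 1)), 1 :]"
proof -
  let ?C = "char_poly_matrix A"
  have "char_poly A = ?C $$ (0, 0) * ?C $$ (1, 1) - ?C $$ (0, 1) * ?C $$ (1, 0)"
    unfolding char_poly_def by (rule det_2x2) (use A in simp)
  then show ?thesis using A by (simp add: char_poly_matrix_def algebra_simps)
qed

lemma order_prod_linear_factors:
  "order x (\<Prod>e\<leftarrow>es. [:- e, 1:]) = count_list es (x :: 'a :: idom)"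
proof (induction es)
  case Nil
  then show ?case by (simp add: order_0I)
next
  case (Cons e es)
  have "(\<Prod>e\<leftarrow>es. [:- e, 1:]) \<noteq> (0 :: 'a poly)"
    by (auto simp: prod_list_zero_iff)
  then have nz: "[:- e, 1:] * (\<Prod>e\<leftarrow>es. [:- e, 1:]) \<noteq> 0"
    by (simp only: mult_eq_0_iff) simp
  have "order x (\<Prod>e\<leftarrow>e # es. [:- e, 1:]) = order x [:- e, 1:] + order x (\<Prod>e\<leftarrow>es. [:- e, 1:])"
    using order_mult[OF nz] by simp
  also have "order x [:- e, 1:] = (if x = e then 1 else 0)"
    using order_linear_power[of x "-e" 1] by auto
  finally show ?case using Cons by simp
qed

lemma sum_count_list:
  assumes "finite S" "set es \<subseteq> S"
  shows "(\<Sum>x\<in>S. real (count_list es x) * f x) = (\<Sum>e\<leftarrow>es. f e)"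
  using assms(2)
proof (induction es)
  case (Cons e es)
  have "real (count_list (e # es) x) * f x = (if e = x then f x else 0) + real (count_list es x) * f x" for x
    by (auto simp: algebra_simps)
  then have "(\<Sum>x\<in>S. real (count_list (e # es) x) * f x)
      = (\<Sum>x\<in>S. if e = x then f x else 0) + (\<Sum>x\<in>S. real (count_list es x) * f x)"
    by (simp add: sum.distrib)
  also have "(\<Sum>x\<in>S. if e = x then f x else 0) = f e"
    using Cons.prems assms(1) by (simp add: sum.delta)
  finally show ?case using Cons by simp
qed simp

lemma sum_roots_prod_linear_factors:
  fixes es :: "complex list"
  assumes "p = (\<Prod>e\<leftarrow>es. [:- e, 1:])"
  shows "(\<Sum>x\<in>{x. poly p x = 0}. real (order x p) * f x) = (\<Sum>e\<leftarrow>es. f e)"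
proof -
  have "{x. poly p x = 0} = set es"
    unfolding assms by (auto simp: poly_prod_list prod_list_zero_iff)
  then show ?thesis
    using sum_count_list[of "set es" es f] by (simp add: assms order_prod_linear_factors)
qed


section \<open>Trace norm of a \<open>2 \<times> 2\<close> matrix\<close>

text \<open>For singular values \<open>s\<^sub>1, s\<^sub>2\<close> of \<open>X\<close> one has \<open>s\<^sub>1\<^sup>2 + s\<^sub>2\<^sup>2 = \<parallel>X\<parallel>\<^sub>F\<^sup>2\<close> and \<open>s\<^sub>1 s\<^sub>2 = |det X|\<close>, whence
  \<open>s\<^sub>1 + s\<^sub>2\<close> is the following.\<close>

definition trace_norm2 :: "(nat \<Rightarrow> nat \<Rightarrow> complex) \<Rightarrow> real" where
  "trace_norm2 X = sqrt ((cmod (X 0 0))\<^sup>2 + (cmod (X 0 1))\<^sup>2 + (cmod (X 1 0))\<^sup>2 + (cmod (X 1 1))\<^sup>2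
      + 2 * cmod (X 0 0 * X 1 1 - X 0 1 * X 1 0))"

lemma cnj_mult_self: "cnj z * z = complex_of_real ((cmod z)\<^sup>2)"
  by (simp add: mult.commute complex_mult_cnj cmod_power2)

lemma nonneg_roots_sqrt_sum:
  fixes t D :: real
  assumes "0 \<le> D" "2 * D \<le> t"
  shows "\<exists>e1 e2. e1 \<ge> 0 \<and> e2 \<ge> 0 \<and> e1 + e2 = t \<and> e1 * e2 = D\<^sup>2 \<and> sqrt e1 + sqrt e2 = sqrt (t + 2 * D)"
proof -
  have "(2 * D)\<^sup>2 \<le> t\<^sup>2" using assms by (intro power_mono) auto
  then have discr: "4 * D\<^sup>2 \<le> t\<^sup>2" by (simp add: power2_eq_square)
  define s where "s = sqrt (t\<^sup>2 - 4 * D\<^sup>2)"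
  have s2: "s\<^sup>2 = t\<^sup>2 - 4 * D\<^sup>2" and s0: "s \<ge> 0" unfolding s_def using discr by simp_all
  have st: "s \<le> t"
    by (rule power2_le_imp_le) (use s2 assms in simp_all)
  define e1 e2 where "e1 = (t + s) / 2" and "e2 = (t - s) / 2"
  have e1: "e1 \<ge> 0" and e2: "e2 \<ge> 0" unfolding e1_def e2_def using st s0 by auto
  have sum: "e1 + e2 = t" and prod: "e1 * e2 = D\<^sup>2"
    unfolding e1_def e2_def using s2 by (auto simp: field_simps power2_eq_square)
  have "(sqrt e1 + sqrt e2)\<^sup>2 = e1 + e2 + 2 * sqrt (e1 * e2)"
    using e1 e2 by (simp add: power2_eq_square algebra_simps real_sqrt_mult)
  also have "\<dots> = t + 2 * D" using sum prod assms(1) by simp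
  finally have "sqrt e1 + sqrt e2 = sqrt (t + 2 * D)"
    by (metis e1 e2 add_nonneg_nonneg real_sqrt_ge_zero real_sqrt_unique)
  then show ?thesis using e1 e2 sum prod by blast
qed

lemma cmod_det_2x2_le:
  fixes X :: "nat \<Rightarrow> nat \<Rightarrow> complex"
  shows "2 * cmod (X 0 0 * X 1 1 - X 0 1 * X 1 0)
    \<le> (cmod (X 0 0))\<^sup>2 + (cmod (X 0 1))\<^sup>2 + (cmod (X 1 0))\<^sup>2 + (cmod (X 1 1))\<^sup>2"
proof -
  have "cmod (X 0 0 * X 1 1 - X 0 1 * X 1 0) \<le> cmod (X 0 0) * cmod (X 1 1) + cmod (X 0 1) * cmod (X 1 0)"
    by (metis norm_mult norm_triangle_ineq4)
  moreover have "2 * (cmod (X 0 0) * cmod (X 1 1)) \<le> (cmod (X 0 0))\<^sup>2 + (cmod (X 1 1))\<^sup>2"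
    using sum_squares_bound by (simp add: mult.assoc)
  moreover have "2 * (cmod (X 0 1) * cmod (X 1 0)) \<le> (cmod (X 0 1))\<^sup>2 + (cmod (X 1 0))\<^sup>2"
    using sum_squares_bound by (simp add: mult.assoc)
  ultimately show ?thesis by linarith
qed

lemma char_poly_gram_2x2:
  fixes X :: "nat \<Rightarrow> nat \<Rightarrow> complex"
  shows "\<exists>e1 e2. e1 \<ge> 0 \<and> e2 \<ge> 0 \<and>
    char_poly (mat 2 2 (\<lambda>(b, b'). \<Sum>c\<in>{0..<2}. cnj (X c b) * X c b')) = [:- of_real e1, 1:] * [:- of_real e2, 1:]
    \<and> sqrt e1 + sqrt e2 = trace_norm2 X"
proof -
  define t where "t = (cmod (X 0 0))\<^sup>2 + (cmod (X 0 1))\<^sup>2 + (cmod (X 1 0))\<^sup>2 + (cmod (X 1 1))\<^sup>2"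
  define d where "d = X 0 0 * X 1 1 - X 0 1 * X 1 0"
  obtain e1 e2 where e: "e1 \<ge> 0" "e2 \<ge> 0" and sum: "e1 + e2 = t" and prod: "e1 * e2 = (cmod d)\<^sup>2"
    and sqrt_sum: "sqrt e1 + sqrt e2 = sqrt (t + 2 * cmod d)"
    using nonneg_roots_sqrt_sum[of "cmod d" t] cmod_det_2x2_le[of X] unfolding t_def d_def by auto
  let ?Q = "mat 2 2 (\<lambda>(b, b'). \<Sum>c\<in>{0..<2}. cnj (X c b) * X c b')"
  have tr: "?Q $$ (0, 0) + ?Q $$ (1, 1) = of_real t"
    by (simp add: sum_0_upto_2 cnj_mult_self t_def)
  have "?Q $$ (0, 0) * ?Q $$ (1, 1) - ?Q $$ (0, 1) * ?Q $$ (1, 0) = d * cnj d"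
    by (simp add: sum_0_upto_2 d_def algebra_simps)
  also have "\<dots> = of_real ((cmod d)\<^sup>2)" by (simp add: complex_mult_cnj cmod_power2)
  finally have dt: "?Q $$ (0, 0) * ?Q $$ (1, 1) - ?Q $$ (0, 1) * ?Q $$ (1, 0) = of_real ((cmod d)\<^sup>2)" .
  have "char_poly ?Q = [: ?Q $$ (0, 0) * ?Q $$ (1, 1) - ?Q $$ (0, 1) * ?Q $$ (1, 0), - (?Q $$ (0, 0) + ?Q $$ (1, 1)), 1 :]"
    by (rule char_poly_2x2) simp
  also have "\<dots> = [:- of_real e1, 1:] * [:- of_real e2, 1:]"
    unfolding tr dt by (simp add: sum[symmetric] prod[symmetric] algebra_simps)
  finally show ?thesis
    using e sqrt_sum unfolding trace_norm2_def t_def d_def by blast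
qed

lemma trace_norm2_adjoint:
  assumes "Y 0 0 = cnj (X 0 0)" "Y 0 1 = cnj (X 1 0)" "Y 1 0 = cnj (X 0 1)" "Y 1 1 = cnj (X 1 1)"
  shows "trace_norm2 Y = trace_norm2 X"
proof -
  have "Y 0 0 * Y 1 1 - Y 0 1 * Y 1 0 = cnj (X 0 0 * X 1 1 - X 0 1 * X 1 0)" unfolding assms by simp
  then have "cmod (Y 0 0 * Y 1 1 - Y 0 1 * Y 1 0) = cmod (X 0 0 * X 1 1 - X 0 1 * X 1 0)"
    by (metis complex_mod_cnj)
  then show ?thesis unfolding trace_norm2_def assms by (simp add: algebra_simps)
qed

section \<open>The measured state of a two-qubit state\<close>

text \<open>The isometry \<open>swap_AprimeB 2 2 * (V \<otimes> I)\<close> from \<open>A \<otimes> B\<close> to \<open>A \<otimes> B \<otimes> A'\<close>, with row index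
  \<open>4i + 2b + k\<close> for \<open>|i\<rangle>|b\<rangle>|k\<rangle>\<close>.\<close>

definition qubit_meas_embedding :: "(nat \<Rightarrow> complex vec) \<Rightarrow> complex mat" where
  "qubit_meas_embedding a = mat 8 4 (\<lambda>(r, c).
     if (r div 2) mod 2 = c mod 2 then a (r mod 2) $ (r div 4) * cnj (a (r mod 2) $ (c div 2)) else 0)"

lemma swap_kron_meas_iso_qubit: "swap_AprimeB 2 2 * kron (meas_iso 2 a) (1\<^sub>m 2) = qubit_meas_embedding a"
proof (rule eq_matI)
  fix r c assume "r < dim_row (qubit_meas_embedding a)" "c < dim_col (qubit_meas_embedding a)"
  then have "r \<in> {0, 1, 2, 3, 4, 5, 6, 7}" and c: "c < 4" by (auto simp: qubit_meas_embedding_def)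
  then show "(swap_AprimeB 2 2 * kron (meas_iso 2 a) (1\<^sub>m 2)) $$ (r, c) = qubit_meas_embedding a $$ (r, c)"
    by (elim insertE emptyE; simp add: swap_AprimeB_def kron_def meas_iso_def qubit_meas_embedding_def
        scalar_prod_def sum_0_upto_8)
qed (simp_all add: swap_AprimeB_def kron_def meas_iso_def qubit_meas_embedding_def)

text \<open>The entry \<open>\<langle>a\<^sub>k b|\<rho>|a\<^sub>l b'\<rangle>\<close> of \<open>\<rho>\<close> in the product basis.\<close>

definition basis_entry :: "(nat \<Rightarrow> complex vec) \<Rightarrow> complex mat \<Rightarrow> nat \<Rightarrow> nat \<Rightarrow> nat \<Rightarrow> nat \<Rightarrow> complex" where
  "basis_entry a \<rho> k l b b' =
     (\<Sum>j\<in>{0..<2}. \<Sum>j'\<in>{0..<2}. cnj (a k $ j) * \<rho> $$ (2 * j + b, 2 * j' + b') * a l $ j')"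

lemma measured_state_qubit:
  "measured_state 2 2 a \<rho> = qubit_meas_embedding a * \<rho> * mat_adjoint (qubit_meas_embedding a)"
  by (simp add: measured_state_def swap_kron_meas_iso_qubit Let_def)

lemma measured_state_qubit_index:
  assumes rho: "\<rho> \<in> carrier_mat 4 4" and r: "r < 8" and c: "c < 8"
  shows "measured_state 2 2 a \<rho> $$ (r, c) = a (r mod 2) $ (r div 4) * cnj (a (c mod 2) $ (c div 4))
     * basis_entry a \<rho> (r mod 2) (c mod 2) ((r div 2) mod 2) ((c div 2) mod 2)"
proof -
  let ?W = "qubit_meas_embedding a"
  define i k b i' k' b' where "i = r div 4" and "k = r mod 2" and "b = (r div 2) mod 2"
     and "i' = c div 4" and "k' = c mod 2" and "b' = (c div 2) mod 2"
  note idx = i_def k_def b_def i'_def k'_def b'_def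
  have W1: "?W $$ (r, s) = (if b = s mod 2 then a k $ i * cnj (a k $ (s div 2)) else 0)" if "s < 4" for s
    using r that unfolding qubit_meas_embedding_def idx by simp
  have W2: "?W $$ (c, s) = (if b' = s mod 2 then a k' $ i' * cnj (a k' $ (s div 2)) else 0)" if "s < 4" for s
    using c that unfolding qubit_meas_embedding_def idx by simp
  have "measured_state 2 2 a \<rho> $$ (r, c) = (\<Sum>t\<in>{0..<4}. (\<Sum>s\<in>{0..<4}. ?W $$ (r, s) * \<rho> $$ (s, t)) * cnj (?W $$ (c, t)))"
    unfolding measured_state_qubit using rho r c by (simp add: qubit_meas_embedding_def scalar_prod_def)
  also have "\<dots> = a k $ i * cnj (a k' $ i') * basis_entry a \<rho> k k' b b'"
  proof -
    have "(b = 0 \<or> b = 1) \<and> (b' = 0 \<or> b' = 1)" unfolding idx by auto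
    then show ?thesis
      by (elim conjE disjE; simp add: sum_0_upto_4 W1 W2 basis_entry_def sum_0_upto_2;
          simp add: algebra_simps eval_nat_numeral)
  qed
  finally show ?thesis unfolding idx .
qed

text \<open>The unitary \<open>|k\<rangle>|b'\<rangle>|b\<rangle> \<mapsto> |a\<^sub>k\<rangle>|b\<rangle>|b'\<rangle>\<close>.\<close>

definition basis_unitary :: "(nat \<Rightarrow> complex vec) \<Rightarrow> complex mat" where
  "basis_unitary a = mat 8 8 (\<lambda>(r, c).
     if (r div 2) mod 2 = c mod 2 \<and> r mod 2 = (c div 2) mod 2 then a (c div 4) $ (r div 4) else 0)"

definition ptrans_core :: "(nat \<Rightarrow> complex vec) \<Rightarrow> complex mat \<Rightarrow> complex mat" where
  "ptrans_core a \<rho> = mat 8 8 (\<lambda>(r, c).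
     if r div 4 = (c div 2) mod 2 \<and> (r div 2) mod 2 = c div 4
     then basis_entry a \<rho> (r div 4) ((r div 2) mod 2) (r mod 2) (c mod 2) else 0)"

lemma ptrans_index_facts:
  fixes r c :: nat assumes "r < 8" "c < 8"
  shows "(2 * (r div 2) + c mod 2) div 4 = r div 4" "(2 * (r div 2) + c mod 2) mod 2 = c mod 2"
    "((2 * (r div 2) + c mod 2) div 2) mod 2 = (r div 2) mod 2" "2 * (r div 2) + c mod 2 < 8"
proof -
  have "r \<in> {0, 1, 2, 3, 4, 5, 6, 7}" "c mod 2 = 0 \<or> c mod 2 = 1" using assms by auto
  then show "(2 * (r div 2) + c mod 2) div 4 = r div 4" "(2 * (r div 2) + c mod 2) mod 2 = c mod 2"
    "((2 * (r div 2) + c mod 2) div 2) mod 2 = (r div 2) mod 2" "2 * (r div 2) + c mod 2 < 8"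
    by (elim insertE emptyE disjE; simp)+
qed

lemma ptrans_measured_state_index:
  assumes rho: "\<rho> \<in> carrier_mat 4 4" and r: "r < 8" and c: "c < 8"
  shows "ptrans2 4 2 (measured_state 2 2 a \<rho>) $$ (r, c) = a (c mod 2) $ (r div 4) * cnj (a (r mod 2) $ (c div 4))
     * basis_entry a \<rho> (c mod 2) (r mod 2) ((r div 2) mod 2) ((c div 2) mod 2)"
proof -
  have "ptrans2 4 2 (measured_state 2 2 a \<rho>) $$ (r, c)
      = measured_state 2 2 a \<rho> $$ (2 * (r div 2) + c mod 2, 2 * (c div 2) + r mod 2)"
    using r c by (simp add: ptrans2_def)
  then show ?thesis
    using measured_state_qubit_index[OF rho ptrans_index_facts(4)[OF r c] ptrans_index_facts(4)[OF c r]]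
      ptrans_index_facts[OF r c] ptrans_index_facts[OF c r] by simp
qed

lemma basis_unitary_conj_index:
  assumes r: "r < 8" and c: "c < 8"
  shows "(basis_unitary a * ptrans_core a \<rho> * mat_adjoint (basis_unitary a)) $$ (r, c)
     = a (c mod 2) $ (r div 4) * cnj (a (r mod 2) $ (c div 4))
       * basis_entry a \<rho> (c mod 2) (r mod 2) ((r div 2) mod 2) ((c div 2) mod 2)"
proof -
  let ?P = "basis_unitary a"
  define i k b i' k' b' where "i = r div 4" and "k = r mod 2" and "b = (r div 2) mod 2"
     and "i' = c div 4" and "k' = c mod 2" and "b' = (c div 2) mod 2"
  note idx = i_def k_def b_def i'_def k'_def b'_def
  have P1: "?P $$ (r, s) = (if b = s mod 2 \<and> k = (s div 2) mod 2 then a (s div 4) $ i else 0)" if "s < 8" for s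
    using r that unfolding basis_unitary_def idx by simp
  have P2: "?P $$ (c, s) = (if b' = s mod 2 \<and> k' = (s div 2) mod 2 then a (s div 4) $ i' else 0)" if "s < 8" for s
    using c that unfolding basis_unitary_def idx by simp
  have "(?P * ptrans_core a \<rho> * mat_adjoint ?P) $$ (r, c)
      = (\<Sum>t\<in>{0..<8}. (\<Sum>s\<in>{0..<8}. ?P $$ (r, s) * ptrans_core a \<rho> $$ (s, t)) * cnj (?P $$ (c, t)))"
    using r c by (simp add: basis_unitary_def ptrans_core_def scalar_prod_def)
  also have "\<dots> = a k' $ i * cnj (a k $ i') * basis_entry a \<rho> k' k b b'"
  proof -
    have "(b = 0 \<or> b = 1) \<and> (b' = 0 \<or> b' = 1) \<and> (k = 0 \<or> k = 1) \<and> (k' = 0 \<or> k' = 1)"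
      unfolding idx by auto
    then show ?thesis
      by (elim conjE disjE; simp add: sum_0_upto_8 P1 P2 ptrans_core_def)
  qed
  finally show ?thesis unfolding idx .
qed

lemma ptrans_measured_state_eq:
  assumes rho: "\<rho> \<in> carrier_mat 4 4"
  shows "ptrans2 4 2 (measured_state 2 2 a \<rho>) = basis_unitary a * ptrans_core a \<rho> * mat_adjoint (basis_unitary a)"
proof (rule eq_matI)
  fix r c
  assume "r < dim_row (basis_unitary a * ptrans_core a \<rho> * mat_adjoint (basis_unitary a))"
    and "c < dim_col (basis_unitary a * ptrans_core a \<rho> * mat_adjoint (basis_unitary a))"
  then have r: "r < 8" and c: "c < 8" by (auto simp: basis_unitary_def)
  show "ptrans2 4 2 (measured_state 2 2 a \<rho>) $$ (r, c)
      = (basis_unitary a * ptrans_core a \<rho> * mat_adjoint (basis_unitary a)) $$ (r, c)"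
    using ptrans_measured_state_index[OF rho r c] basis_unitary_conj_index[OF r c] by simp
qed (auto simp: ptrans2_def basis_unitary_def)

lemma orthonormal_basis_2_inner:
  assumes "orthonormal_basis 2 a" "j < 2" "k < 2"
  shows "cnj (a j $ 0) * a k $ 0 + cnj (a j $ 1) * a k $ 1 = (if j = k then 1 else 0)"
proof -
  have "a k \<bullet>c a j = (if k = j then 1 else 0)" "a j \<in> carrier_vec 2"
    using assms unfolding orthonormal_basis_def by auto
  then show ?thesis by (auto simp: scalar_prod_def sum_0_upto_2 mult.commute split: if_splits)
qed

lemma basis_unitary_adjoint_mult:
  assumes "orthonormal_basis 2 a"
  shows "mat_adjoint (basis_unitary a) * basis_unitary a = 1\<^sub>m 8"
proof (rule eq_matI)
  note inner = orthonormal_basis_2_inner[OF assms, of 0 0, simplified]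
    orthonormal_basis_2_inner[OF assms, of 0 1, simplified]
    orthonormal_basis_2_inner[OF assms, of 1 0, simplified]
    orthonormal_basis_2_inner[OF assms, of 1 1, simplified]
  fix r c assume "r < dim_row (1\<^sub>m 8 :: complex mat)" "c < dim_col (1\<^sub>m 8 :: complex mat)"
  then have "r \<in> {0, 1, 2, 3, 4, 5, 6, 7}" "c \<in> {0, 1, 2, 3, 4, 5, 6, 7}" by auto
  then show "(mat_adjoint (basis_unitary a) * basis_unitary a) $$ (r, c) = 1\<^sub>m 8 $$ (r, c)"
    by (elim insertE emptyE; simp add: basis_unitary_def scalar_prod_def sum_0_upto_8 inner)
qed (auto simp: basis_unitary_def)

lemma basis_unitary_mult_adjoint:
  assumes "orthonormal_basis 2 a"
  shows "basis_unitary a * mat_adjoint (basis_unitary a) = 1\<^sub>m 8"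
  by (rule mat_mult_left_right_inverse[OF _ _ basis_unitary_adjoint_mult[OF assms]])
    (auto simp: basis_unitary_def)

definition gram_block :: "(nat \<Rightarrow> complex vec) \<Rightarrow> complex mat \<Rightarrow> nat \<Rightarrow> nat \<Rightarrow> complex mat" where
  "gram_block a \<rho> k l = mat 2 2 (\<lambda>(b, b'). \<Sum>c\<in>{0..<2}. cnj (basis_entry a \<rho> l k c b) * basis_entry a \<rho> l k c b')"

definition gram_blockdiag :: "(nat \<Rightarrow> complex vec) \<Rightarrow> complex mat \<Rightarrow> complex mat" where
  "gram_blockdiag a \<rho> = four_block_mat
     (four_block_mat (gram_block a \<rho> 0 0) (0\<^sub>m 2 2) (0\<^sub>m 2 2) (gram_block a \<rho> 0 1)) (0\<^sub>m 4 4) (0\<^sub>m 4 4)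
     (four_block_mat (gram_block a \<rho> 1 0) (0\<^sub>m 2 2) (0\<^sub>m 2 2) (gram_block a \<rho> 1 1))"

lemma ptrans_core_gram: "mat_adjoint (ptrans_core a \<rho>) * ptrans_core a \<rho> = gram_blockdiag a \<rho>"
proof (rule eq_matI)
  fix r c assume "r < dim_row (gram_blockdiag a \<rho>)" "c < dim_col (gram_blockdiag a \<rho>)"
  then have "r \<in> {0, 1, 2, 3, 4, 5, 6, 7}" "c \<in> {0, 1, 2, 3, 4, 5, 6, 7}"
    by (auto simp: gram_blockdiag_def gram_block_def)
  then show "(mat_adjoint (ptrans_core a \<rho>) * ptrans_core a \<rho>) $$ (r, c) = gram_blockdiag a \<rho> $$ (r, c)"
    by (elim insertE emptyE; simp add: ptrans_core_def gram_blockdiag_def gram_block_def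
        scalar_prod_def sum_0_upto_8 sum_0_upto_2)
qed (auto simp: ptrans_core_def gram_blockdiag_def gram_block_def)

lemma char_poly_four_block_diag:
  assumes "A \<in> carrier_mat n n" "D \<in> carrier_mat m m"
  shows "char_poly (four_block_mat A (0\<^sub>m n m) (0\<^sub>m m n) D) = char_poly A * (char_poly D :: complex poly)"
proof (rule char_poly_0_block[OF refl])
  show "\<exists>es. char_poly A = (\<Prod>a\<leftarrow>es. [:- a, 1:])" "\<exists>es. char_poly D = (\<Prod>a\<leftarrow>es. [:- a, 1:])"
    using char_poly_factorized[OF assms(1)] char_poly_factorized[OF assms(2)] by blast+
qed (use assms in auto)

lemma char_poly_ptrans_gram:
  assumes orth: "orthonormal_basis 2 a" and rho: "\<rho> \<in> carrier_mat 4 4"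
  defines "T \<equiv> ptrans2 4 2 (measured_state 2 2 a \<rho>)"
  shows "char_poly (mat_adjoint T * T) = char_poly (gram_block a \<rho> 0 0) * char_poly (gram_block a \<rho> 0 1)
     * char_poly (gram_block a \<rho> 1 0) * char_poly (gram_block a \<rho> 1 1)"
proof -
  let ?P = "basis_unitary a" and ?C = "ptrans_core a \<rho>" and ?G = "gram_block a \<rho>"
  have P: "?P \<in> carrier_mat 8 8" and C: "?C \<in> carrier_mat 8 8"
    by (auto simp: basis_unitary_def ptrans_core_def)
  have Pt: "mat_adjoint ?P \<in> carrier_mat 8 8" using P by simp
  have T: "T = ?P * ?C * mat_adjoint ?P"
    unfolding T_def by (rule ptrans_measured_state_eq[OF rho])
  have "mat_adjoint T = mat_adjoint (mat_adjoint ?P) * mat_adjoint (?P * ?C)"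
    unfolding T by (rule mat_adjoint_mult[of _ 8 8 _ 8]) (use P C Pt in auto)
  also have "mat_adjoint (?P * ?C) = mat_adjoint ?C * mat_adjoint ?P"
    by (rule mat_adjoint_mult[of _ 8 8 _ 8]) (use P C in auto)
  finally have Tt: "mat_adjoint T = ?P * mat_adjoint ?C * mat_adjoint ?P"
    using P C Pt by (simp add: assoc_mult_mat[of _ 8 8 _ 8 _ 8])
  have "mat_adjoint T * T = ?P * (mat_adjoint ?C * ?C) * mat_adjoint ?P"
    unfolding Tt by (subst T, rule mult_sandwich[of _ 8])
      (use P C Pt basis_unitary_adjoint_mult[OF orth] in auto)
  then have TT: "mat_adjoint T * T = ?P * gram_blockdiag a \<rho> * mat_adjoint ?P"
    by (simp add: ptrans_core_gram)
  have BD: "gram_blockdiag a \<rho> \<in> carrier_mat 8 8" by (auto simp: gram_blockdiag_def gram_block_def)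
  have "similar_mat (mat_adjoint T * T) (gram_blockdiag a \<rho>)"
    by (rule similar_matI[where P = ?P and Q = "mat_adjoint ?P" and n = 8])
      (use TT BD P Pt basis_unitary_adjoint_mult[OF orth] basis_unitary_mult_adjoint[OF orth]
        in \<open>auto simp: assoc_mult_mat[of _ 8 8 _ 8 _ 8]\<close>)
  then have "char_poly (mat_adjoint T * T) = char_poly (gram_blockdiag a \<rho>)"
    by (rule char_poly_similar)
  also have "\<dots> = char_poly (four_block_mat (?G 0 0) (0\<^sub>m 2 2) (0\<^sub>m 2 2) (?G 0 1))
      * char_poly (four_block_mat (?G 1 0) (0\<^sub>m 2 2) (0\<^sub>m 2 2) (?G 1 1))"
    unfolding gram_blockdiag_def by (rule char_poly_four_block_diag) (auto simp: gram_block_def)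
  also have "char_poly (four_block_mat (?G 0 0) (0\<^sub>m 2 2) (0\<^sub>m 2 2) (?G 0 1))
      = char_poly (?G 0 0) * char_poly (?G 0 1)"
    by (rule char_poly_four_block_diag) (auto simp: gram_block_def)
  also have "char_poly (four_block_mat (?G 1 0) (0\<^sub>m 2 2) (0\<^sub>m 2 2) (?G 1 1))
      = char_poly (?G 1 0) * char_poly (?G 1 1)"
    by (rule char_poly_four_block_diag) (auto simp: gram_block_def)
  finally show ?thesis by (simp add: mult.assoc)
qed

lemma trace_norm_ptrans_measured_state:
  assumes orth: "orthonormal_basis 2 a" and rho: "\<rho> \<in> carrier_mat 4 4"
  shows "trace_norm (ptrans2 4 2 (measured_state 2 2 a \<rho>)) =
     trace_norm2 (basis_entry a \<rho> 0 0) + trace_norm2 (basis_entry a \<rho> 1 0)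
     + trace_norm2 (basis_entry a \<rho> 0 1) + trace_norm2 (basis_entry a \<rho> 1 1)"
proof -
  let ?G = "gram_block a \<rho>" and ?X = "basis_entry a \<rho>"
  obtain e1 e2 where E1: "char_poly (?G 0 0) = [:- of_real e1, 1:] * [:- of_real e2, 1:]"
      "sqrt e1 + sqrt e2 = trace_norm2 (?X 0 0)"
    using char_poly_gram_2x2[of "?X 0 0"] unfolding gram_block_def by blast
  obtain e3 e4 where E2: "char_poly (?G 0 1) = [:- of_real e3, 1:] * [:- of_real e4, 1:]"
      "sqrt e3 + sqrt e4 = trace_norm2 (?X 1 0)"
    using char_poly_gram_2x2[of "?X 1 0"] unfolding gram_block_def by blast
  obtain e5 e6 where E3: "char_poly (?G 1 0) = [:- of_real e5, 1:] * [:- of_real e6, 1:]"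
      "sqrt e5 + sqrt e6 = trace_norm2 (?X 0 1)"
    using char_poly_gram_2x2[of "?X 0 1"] unfolding gram_block_def by blast
  obtain e7 e8 where E4: "char_poly (?G 1 1) = [:- of_real e7, 1:] * [:- of_real e8, 1:]"
      "sqrt e7 + sqrt e8 = trace_norm2 (?X 1 1)"
    using char_poly_gram_2x2[of "?X 1 1"] unfolding gram_block_def by blast
  define es where "es = map complex_of_real [e1, e2, e3, e4, e5, e6, e7, e8]"
  let ?T = "ptrans2 4 2 (measured_state 2 2 a \<rho>)"
  have "char_poly (mat_adjoint ?T * ?T) = (\<Prod>e\<leftarrow>es. [:- e, 1:])"
    unfolding char_poly_ptrans_gram[OF orth rho] E1 E2 E3 E4 es_def
    by (simp only: list.map prod_list.Cons prod_list.Nil mult_1_right mult.assoc)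
  then have "trace_norm ?T = (\<Sum>e\<leftarrow>es. sqrt (Re e))"
    unfolding trace_norm_def Let_def by (rule sum_roots_prod_linear_factors)
  also have "\<dots> = (sqrt e1 + sqrt e2) + (sqrt e3 + sqrt e4) + (sqrt e5 + sqrt e6) + (sqrt e7 + sqrt e8)"
    unfolding es_def by simp
  finally show ?thesis unfolding E1 E2 E3 E4 .
qed


section \<open>Bell diagonal states\<close>

definition inv_sqrt2 :: complex where "inv_sqrt2 = complex_of_real (1 / sqrt 2)"

lemma inv_sqrt2_cnj [simp]: "cnj inv_sqrt2 = inv_sqrt2"
  by (simp add: inv_sqrt2_def)

lemma inv_sqrt2_sq: "inv_sqrt2 * inv_sqrt2 = 1 / 2"
proof -
  have "inv_sqrt2 * inv_sqrt2 = complex_of_real ((1 / sqrt 2) * (1 / sqrt 2))"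
    by (simp only: inv_sqrt2_def of_real_mult)
  also have "(1 / sqrt 2) * (1 / sqrt 2) = (1 / 2 :: real)" by (simp add: field_simps)
  finally show ?thesis by simp
qed

lemma bell_vec_index:
  "dim_vec phi_plus = 4" "phi_plus $ 0 = inv_sqrt2" "phi_plus $ 1 = 0" "phi_plus $ 2 = 0" "phi_plus $ 3 = inv_sqrt2"
  "dim_vec phi_minus = 4" "phi_minus $ 0 = inv_sqrt2" "phi_minus $ 1 = 0" "phi_minus $ 2 = 0" "phi_minus $ 3 = - inv_sqrt2"
  "dim_vec psi_plus = 4" "psi_plus $ 0 = 0" "psi_plus $ 1 = inv_sqrt2" "psi_plus $ 2 = inv_sqrt2" "psi_plus $ 3 = 0"
  "dim_vec psi_minus = 4" "psi_minus $ 0 = 0" "psi_minus $ 1 = inv_sqrt2" "psi_minus $ 2 = - inv_sqrt2" "psi_minus $ 3 = 0"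
proof -
  have eqs: "phi_plus = vec_of_list [inv_sqrt2, 0, 0, inv_sqrt2]"
    "phi_minus = vec_of_list [inv_sqrt2, 0, 0, - inv_sqrt2]"
    "psi_plus = vec_of_list [0, inv_sqrt2, inv_sqrt2, 0]"
    "psi_minus = vec_of_list [0, inv_sqrt2, - inv_sqrt2, 0]"
    by (simp_all add: phi_plus_def phi_minus_def psi_plus_def psi_minus_def inv_sqrt2_def)
  show "dim_vec phi_plus = 4" "phi_plus $ 0 = inv_sqrt2" "phi_plus $ 1 = 0" "phi_plus $ 2 = 0" "phi_plus $ 3 = inv_sqrt2"
    "dim_vec phi_minus = 4" "phi_minus $ 0 = inv_sqrt2" "phi_minus $ 1 = 0" "phi_minus $ 2 = 0" "phi_minus $ 3 = - inv_sqrt2"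
    "dim_vec psi_plus = 4" "psi_plus $ 0 = 0" "psi_plus $ 1 = inv_sqrt2" "psi_plus $ 2 = inv_sqrt2" "psi_plus $ 3 = 0"
    "dim_vec psi_minus = 4" "psi_minus $ 0 = 0" "psi_minus $ 1 = inv_sqrt2" "psi_minus $ 2 = - inv_sqrt2" "psi_minus $ 3 = 0"
    by (simp_all only: eqs vec_of_list_index dim_vec_of_list; simp)+
qed

definition bell_diag_mat :: "real \<Rightarrow> real \<Rightarrow> real \<Rightarrow> real \<Rightarrow> complex mat" where
  "bell_diag_mat p0 p1 p2 p3 = mat 4 4 (\<lambda>(i, j). complex_of_real
     (if (i = 0 \<and> j = 0) \<or> (i = 3 \<and> j = 3) then (p0 + p3) / 2
      else if (i = 1 \<and> j = 1) \<or> (i = 2 \<and> j = 2) then (p1 + p2) / 2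
      else if (i = 0 \<and> j = 3) \<or> (i = 3 \<and> j = 0) then (p0 - p3) / 2
      else if (i = 1 \<and> j = 2) \<or> (i = 2 \<and> j = 1) then (p1 - p2) / 2 else 0))"

lemma bell_diag_mat_carrier: "bell_diag_mat p0 p1 p2 p3 \<in> carrier_mat 4 4"
  by (simp add: bell_diag_mat_def)

lemma bell_mixture_eq_bell_diag_mat:
  "complex_of_real p0 \<cdot>\<^sub>m ketbra phi_plus + complex_of_real p1 \<cdot>\<^sub>m ketbra psi_plus
     + complex_of_real p2 \<cdot>\<^sub>m ketbra psi_minus + complex_of_real p3 \<cdot>\<^sub>m ketbra phi_minus
   = bell_diag_mat p0 p1 p2 p3" (is "?M = _")
proof (rule eq_matI)
  fix i j assume "i < dim_row (bell_diag_mat p0 p1 p2 p3)" "j < dim_col (bell_diag_mat p0 p1 p2 p3)"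
  then have ij: "i < 4" "j < 4" by (auto simp: bell_diag_mat_def)
  have entry: "?M $$ (i, j)
     = of_real p0 * (phi_plus $ i * cnj (phi_plus $ j)) + of_real p1 * (psi_plus $ i * cnj (psi_plus $ j))
      + of_real p2 * (psi_minus $ i * cnj (psi_minus $ j)) + of_real p3 * (phi_minus $ i * cnj (phi_minus $ j))"
    using ij by (simp add: ketbra_def bell_vec_index)
  have "i \<in> {0, 1, 2, 3}" "j \<in> {0, 1, 2, 3}" using ij by auto
  then show "?M $$ (i, j) = bell_diag_mat p0 p1 p2 p3 $$ (i, j)"
    unfolding entry
    by (elim insertE emptyE; simp add: bell_diag_mat_def bell_vec_index bell_vec_index[unfolded One_nat_def]
        inv_sqrt2_sq; simp add: algebra_simps)
qed (auto simp: bell_diag_mat_def ketbra_def bell_vec_index)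

lemma sigma_carrier: "sigma \<mu> \<in> carrier_mat 2 2"
proof -
  have "length [a, b] = (2 :: nat)" for a b :: "complex list" by simp
  then show ?thesis
    unfolding sigma_def mat_of_rows_list_def carrier_mat_def
    by (simp only: dim_row_mat dim_col_mat if_cancel) (simp split: if_split)
qed

lemma sigma_index:
  "sigma 1 $$ (0, 0) = 0" "sigma 1 $$ (0, 1) = 1" "sigma 1 $$ (1, 0) = 1" "sigma 1 $$ (1, 1) = 0"
  "sigma 2 $$ (0, 0) = 0" "sigma 2 $$ (0, 1) = - \<i>" "sigma 2 $$ (1, 0) = \<i>" "sigma 2 $$ (1, 1) = 0"
  "sigma 3 $$ (0, 0) = 1" "sigma 3 $$ (0, 1) = 0" "sigma 3 $$ (1, 0) = 0" "sigma 3 $$ (1, 1) = -1"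
  by (simp_all add: sigma_def mat_of_rows_list_def)

lemma corr_diag_eq_sum:
  assumes "\<rho> \<in> carrier_mat 4 4"
  shows "corr \<rho> \<mu> \<mu> = (\<Sum>i\<in>{0..<4}. \<Sum>k\<in>{0..<4}.
     sigma \<mu> $$ (i div 2, k div 2) * sigma \<mu> $$ (i mod 2, k mod 2) * \<rho> $$ (k, i))"
proof -
  have K: "kron (sigma \<mu>) (sigma \<mu>) \<in> carrier_mat 4 4"
    using sigma_carrier[of \<mu>] by (simp add: kron_def)
  then have "corr \<rho> \<mu> \<mu> = (\<Sum>i\<in>{0..<4}. (kron (sigma \<mu>) (sigma \<mu>) * \<rho>) $$ (i, i))"
    unfolding corr_def mtrace_def by (simp add: lessThan_atLeast0)
  also have "\<dots> = (\<Sum>i\<in>{0..<4}. \<Sum>k\<in>{0..<4}.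
     sigma \<mu> $$ (i div 2, k div 2) * sigma \<mu> $$ (i mod 2, k mod 2) * \<rho> $$ (k, i))"
    by (rule sum.cong[OF refl]) (use K assms sigma_carrier[of \<mu>] in \<open>auto simp: scalar_prod_def kron_def\<close>)
  finally show ?thesis .
qed

lemma corr_bell_diag_mat:
  "corr (bell_diag_mat p0 p1 p2 p3) 1 1 = of_real (p0 - p3 + p1 - p2)"
  "corr (bell_diag_mat p0 p1 p2 p3) 2 2 = of_real (p1 - p2 - p0 + p3)"
  "corr (bell_diag_mat p0 p1 p2 p3) 3 3 = of_real (p0 + p3 - p1 - p2)"
  by (simp only: corr_diag_eq_sum[OF bell_diag_mat_carrier] sum_0_upto_4;
      simp add: sigma_index sigma_index[unfolded One_nat_def] bell_diag_mat_def; simp add: field_simps)+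

declare One_nat_def [simp del]

lemma basis_entry_bell_diag_mat:
  fixes a :: "nat \<Rightarrow> complex vec" and p0 p1 p2 p3 :: real
  defines "A \<equiv> (p0 + p3) / 2" and "C \<equiv> (p1 + p2) / 2" and "B \<equiv> (p0 - p3) / 2" and "D \<equiv> (p1 - p2) / 2"
  shows "basis_entry a (bell_diag_mat p0 p1 p2 p3) k l 0 0
      = of_real A * (cnj (a k $ 0) * a l $ 0) + of_real C * (cnj (a k $ 1) * a l $ 1)"
    "basis_entry a (bell_diag_mat p0 p1 p2 p3) k l 0 1
      = of_real B * (cnj (a k $ 0) * a l $ 1) + of_real D * (cnj (a k $ 1) * a l $ 0)"
    "basis_entry a (bell_diag_mat p0 p1 p2 p3) k l 1 0
      = of_real D * (cnj (a k $ 0) * a l $ 1) + of_real B * (cnj (a k $ 1) * a l $ 0)"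
    "basis_entry a (bell_diag_mat p0 p1 p2 p3) k l 1 1
      = of_real C * (cnj (a k $ 0) * a l $ 0) + of_real A * (cnj (a k $ 1) * a l $ 1)"
  unfolding A_def C_def B_def D_def
  by (simp_all add: basis_entry_def sum_0_upto_2 bell_diag_mat_def; simp add: algebra_simps)+


lemma cmod_parallelogram: "(cmod (a + b))\<^sup>2 + (cmod (a - b))\<^sup>2 = 2 * (cmod a)\<^sup>2 + 2 * (cmod b)\<^sup>2"
  by (simp only: cmod_power2) (simp add: power2_eq_square algebra_simps)

lemma trace_norm2_psd:
  fixes x0 x1 :: real
  assumes "X 0 0 = of_real x0" "X 1 1 = of_real x1" "X 1 0 = cnj (X 0 1)"
    and "0 \<le> x0" "0 \<le> x1" "(cmod (X 0 1))\<^sup>2 \<le> x0 * x1"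
  shows "trace_norm2 X = x0 + x1"
proof -
  let ?m = "cmod (X 0 1)"
  have "X 0 0 * X 1 1 - X 0 1 * X 1 0 = of_real (x0 * x1 - ?m\<^sup>2)"
    unfolding assms(1-3) by (simp add: mult.commute[of "X 0 1"] cnj_mult_self)
  then have "cmod (X 0 0 * X 1 1 - X 0 1 * X 1 0) = x0 * x1 - ?m\<^sup>2"
    using assms(6) by (simp only: norm_of_real)
  then have "trace_norm2 X = sqrt (x0\<^sup>2 + ?m\<^sup>2 + ?m\<^sup>2 + x1\<^sup>2 + 2 * (x0 * x1 - ?m\<^sup>2))"
    unfolding trace_norm2_def using assms by simp
  also have "x0\<^sup>2 + ?m\<^sup>2 + ?m\<^sup>2 + x1\<^sup>2 + 2 * (x0 * x1 - ?m\<^sup>2) = (x0 + x1)\<^sup>2"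
    by (simp add: power2_eq_square algebra_simps)
  finally show ?thesis using assms(4,5) by simp
qed

lemma trace_norm2_diag_block:
  fixes \<alpha> \<beta> :: complex and A B C D :: real
  assumes n: "cnj \<alpha> * \<alpha> + cnj \<beta> * \<beta> = 1" and AB: "\<bar>B\<bar> \<le> A" and CD: "\<bar>D\<bar> \<le> C"
    and X: "X 0 0 = of_real A * (cnj \<alpha> * \<alpha>) + of_real C * (cnj \<beta> * \<beta>)"
      "X 0 1 = of_real B * (cnj \<alpha> * \<beta>) + of_real D * (cnj \<beta> * \<alpha>)"
      "X 1 0 = of_real D * (cnj \<alpha> * \<beta>) + of_real B * (cnj \<beta> * \<alpha>)"
      "X 1 1 = of_real C * (cnj \<alpha> * \<alpha>) + of_real A * (cnj \<beta> * \<beta>)"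
  shows "trace_norm2 X = A + C"
proof -
  define u v where "u = (cmod \<alpha>)\<^sup>2" and "v = (cmod \<beta>)\<^sup>2"
  have uv: "u + v = 1"
    using n unfolding u_def v_def cnj_mult_self by (metis of_real_1 of_real_add of_real_eq_iff)
  have u0: "u \<ge> 0" "v \<ge> 0" unfolding u_def v_def by auto
  define w where "w = cnj \<alpha> * \<beta>"
  have w2: "(cmod w)\<^sup>2 = u * v" unfolding w_def u_def v_def by (simp add: norm_mult power_mult_distrib)
  define x0 x1 where "x0 = A * u + C * v" and "x1 = C * u + A * v"
  have A0: "A \<ge> 0" "C \<ge> 0" using AB CD by auto
  have "cmod (X 0 1) \<le> cmod (of_real B * (cnj \<alpha> * \<beta>)) + cmod (of_real D * (cnj \<beta> * \<alpha>))"
    unfolding X by (rule norm_triangle_ineq)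
  also have "\<dots> = (\<bar>B\<bar> + \<bar>D\<bar>) * cmod w" unfolding w_def by (simp add: norm_mult algebra_simps)
  finally have "cmod (X 0 1) \<le> (\<bar>B\<bar> + \<bar>D\<bar>) * cmod w" .
  then have "(cmod (X 0 1))\<^sup>2 \<le> ((\<bar>B\<bar> + \<bar>D\<bar>) * cmod w)\<^sup>2" by (rule power_mono) simp
  also have "\<dots> = (\<bar>B\<bar> + \<bar>D\<bar>)\<^sup>2 * (u * v)" by (simp add: power_mult_distrib w2)
  also have "\<dots> \<le> (A + C)\<^sup>2 * (u * v)"
    by (rule mult_right_mono, rule power_mono) (use AB CD u0 in auto)
  also have "\<dots> = x0 * x1 - A * C * (u - v)\<^sup>2"
    unfolding x0_def x1_def by (simp add: power2_eq_square algebra_simps)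
  also have "\<dots> \<le> x0 * x1" using A0 by simp
  finally have "(cmod (X 0 1))\<^sup>2 \<le> x0 * x1" .
  moreover have "X 0 0 = of_real x0" "X 1 1 = of_real x1"
    unfolding X x0_def x1_def u_def v_def cnj_mult_self by simp_all
  moreover have "X 1 0 = cnj (X 0 1)" unfolding X by (simp add: algebra_simps)
  moreover have "0 \<le> x0" "0 \<le> x1" unfolding x0_def x1_def using A0 u0 by auto
  ultimately have "trace_norm2 X = x0 + x1" by (intro trace_norm2_psd)
  also have "\<dots> = (A + C) * (u + v)" unfolding x0_def x1_def by (simp add: algebra_simps)
  finally show ?thesis using uv by simp
qed

text \<open>\<open>16 \<parallel>X\<parallel>\<^sub>1\<^sup>2\<close> for an off-diagonal block \<open>X\<close> of a Bell diagonal state, in terms of the correlations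
  \<open>c\<^sub>i\<close> and the transition amplitudes \<open>v\<^sub>i\<close>.\<close>

definition off_block_weight :: "real \<Rightarrow> real \<Rightarrow> real \<Rightarrow> complex \<Rightarrow> complex \<Rightarrow> complex \<Rightarrow> real" where
  "off_block_weight c1 c2 c3 v1 v2 v3 = 2 * (c1\<^sup>2 * (cmod v1)\<^sup>2 + c2\<^sup>2 * (cmod v2)\<^sup>2 + c3\<^sup>2 * (cmod v3)\<^sup>2)
     + 2 * cmod (of_real (c1\<^sup>2) * v1\<^sup>2 + of_real (c2\<^sup>2) * v2\<^sup>2 + of_real (c3\<^sup>2) * v3\<^sup>2)"

lemma trace_norm2_off_block:
  fixes \<alpha> \<beta> \<gamma> \<delta> :: complex and A B C D :: real
  assumes o: "cnj \<alpha> * \<gamma> + cnj \<beta> * \<delta> = 0"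
    and X: "X 0 0 = of_real A * (cnj \<alpha> * \<gamma>) + of_real C * (cnj \<beta> * \<delta>)"
      "X 0 1 = of_real B * (cnj \<alpha> * \<delta>) + of_real D * (cnj \<beta> * \<gamma>)"
      "X 1 0 = of_real D * (cnj \<alpha> * \<delta>) + of_real B * (cnj \<beta> * \<gamma>)"
      "X 1 1 = of_real C * (cnj \<alpha> * \<gamma>) + of_real A * (cnj \<beta> * \<delta>)"
  shows "trace_norm2 X = sqrt (off_block_weight (2 * (B + D)) (2 * (D - B)) (2 * (A - C))
      (cnj \<alpha> * \<delta> + cnj \<beta> * \<gamma>) (\<i> * (cnj \<beta> * \<gamma> - cnj \<alpha> * \<delta>)) (2 * (cnj \<alpha> * \<gamma>)) / 16)"
proof -
  define x y z where "x = cnj \<alpha> * \<gamma>" and "y = cnj \<alpha> * \<delta>" and "z = cnj \<beta> * \<gamma>"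
  have bd: "cnj \<beta> * \<delta> = - x" using o unfolding x_def by (simp add: eq_neg_iff_add_eq_0 add.commute)
  define c1 c2 c3 where "c1 = 2 * (B + D)" and "c2 = 2 * (D - B)" and "c3 = 2 * (A - C)"
  define v1 v2 v3 where "v1 = y + z" and "v2 = \<i> * (z - y)" and "v3 = 2 * x"
  define P Q where "P = of_real c1 * v1" and "Q = of_real c2 * (y - z)"
  have X00: "X 0 0 = of_real (A - C) * x" unfolding X bd x_def by (simp add: algebra_simps)
  have X11: "X 1 1 = - (of_real (A - C) * x)" unfolding X bd x_def by (simp add: algebra_simps)
  have X01: "X 0 1 = (P - Q) / 4"
    unfolding X P_def Q_def v1_def c1_def c2_def y_def z_def by (simp add: algebra_simps)
  have X10: "X 1 0 = (P + Q) / 4"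
    unfolding X P_def Q_def v1_def c1_def c2_def y_def z_def by (simp add: algebra_simps)
  have v2sq: "v2\<^sup>2 = - (y - z)\<^sup>2" unfolding v2_def by (simp add: power_mult_distrib power2_eq_square algebra_simps)
  have cv2: "cmod v2 = cmod (y - z)" unfolding v2_def by (simp add: norm_mult norm_minus_commute)
  have "(cmod (X 0 1))\<^sup>2 + (cmod (X 1 0))\<^sup>2 = ((cmod (P + Q))\<^sup>2 + (cmod (P - Q))\<^sup>2) / 16"
    unfolding X01 X10 by (simp add: norm_divide power_divide)
  also have "\<dots> = (2 * (cmod P)\<^sup>2 + 2 * (cmod Q)\<^sup>2) / 16" by (simp add: cmod_parallelogram)
  also have "(cmod P)\<^sup>2 = c1\<^sup>2 * (cmod v1)\<^sup>2" unfolding P_def by (simp add: norm_mult power_mult_distrib)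
  also have "(cmod Q)\<^sup>2 = c2\<^sup>2 * (cmod v2)\<^sup>2" unfolding Q_def cv2 by (simp add: norm_mult power_mult_distrib)
  finally have off: "(cmod (X 0 1))\<^sup>2 + (cmod (X 1 0))\<^sup>2 = (2 * (c1\<^sup>2 * (cmod v1)\<^sup>2) + 2 * (c2\<^sup>2 * (cmod v2)\<^sup>2)) / 16" .
  have "cmod (X 0 0) = \<bar>A - C\<bar> * cmod x" "cmod (X 1 1) = \<bar>A - C\<bar> * cmod x"
    unfolding X00 X11 by (simp only: norm_mult norm_of_real norm_minus_cancel)+
  then have diag: "(cmod (X 0 0))\<^sup>2 + (cmod (X 1 1))\<^sup>2 = 2 * (c3\<^sup>2 * (cmod v3)\<^sup>2) / 16"
    unfolding c3_def v3_def
    by (simp add: norm_mult power_mult_distrib power2_abs; simp add: power2_eq_square algebra_simps)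
  have "X 0 0 * X 1 1 - X 0 1 * X 1 0
      = - (of_real (c1\<^sup>2) * v1\<^sup>2 + of_real (c2\<^sup>2) * v2\<^sup>2 + of_real (c3\<^sup>2) * v3\<^sup>2) / 16"
    unfolding X00 X11 X01 X10 v2sq unfolding P_def Q_def c3_def v3_def
    by (simp add: power2_eq_square field_simps)
  then have det: "cmod (X 0 0 * X 1 1 - X 0 1 * X 1 0)
      = cmod (of_real (c1\<^sup>2) * v1\<^sup>2 + of_real (c2\<^sup>2) * v2\<^sup>2 + of_real (c3\<^sup>2) * v3\<^sup>2) / 16"
    by (simp only: norm_divide norm_minus_cancel) simp
  have "trace_norm2 X = sqrt (off_block_weight c1 c2 c3 v1 v2 v3 / 16)"
    unfolding trace_norm2_def det off_block_weight_def using off diag by (simp add: algebra_simps)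
  then show ?thesis unfolding c1_def c2_def c3_def v1_def v2_def v3_def x_def y_def z_def .
qed

text \<open>For an orthonormal basis \<open>(\<alpha>, \<beta>), (\<gamma>, \<delta>)\<close> these are the amplitudes \<open>v\<^sub>i = \<langle>a\<^sub>0|\<sigma>\<^sub>i|a\<^sub>1\<rangle>\<close>
  (for \<open>\<sigma>\<^sub>z\<close> after using orthogonality).\<close>

lemma transition_amplitudes_props:
  fixes \<alpha> \<beta> \<gamma> \<delta> :: complex
  assumes n1: "cnj \<alpha> * \<alpha> + cnj \<beta> * \<beta> = 1" and n2: "cnj \<gamma> * \<gamma> + cnj \<delta> * \<delta> = 1"
    and o: "cnj \<alpha> * \<gamma> + cnj \<beta> * \<delta> = 0"
  defines "v1 \<equiv> cnj \<alpha> * \<delta> + cnj \<beta> * \<gamma>" and "v2 \<equiv> \<i> * (cnj \<beta> * \<gamma> - cnj \<alpha> * \<delta>)"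
    and "v3 \<equiv> 2 * (cnj \<alpha> * \<gamma>)"
  shows "(cmod v1)\<^sup>2 + (cmod v2)\<^sup>2 + (cmod v3)\<^sup>2 = 2" "v1\<^sup>2 + v2\<^sup>2 + v3\<^sup>2 = 0"
proof -
  have bd: "cnj \<beta> * \<delta> = - (cnj \<alpha> * \<gamma>)" using o by (simp add: eq_neg_iff_add_eq_0 add.commute)
  have "v1\<^sup>2 + v2\<^sup>2 + v3\<^sup>2 = 4 * (cnj \<alpha> * \<gamma>) * (cnj \<alpha> * \<gamma> + cnj \<beta> * \<delta>)"
    unfolding v1_def v2_def v3_def by (simp add: power2_eq_square algebra_simps)
  then show "v1\<^sup>2 + v2\<^sup>2 + v3\<^sup>2 = 0" using o by simp
  define a b c d where "a = (cmod \<alpha>)\<^sup>2" and "b = (cmod \<beta>)\<^sup>2" and "c = (cmod \<gamma>)\<^sup>2" and "d = (cmod \<delta>)\<^sup>2"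
  have ab: "a + b = 1"
    using n1 unfolding a_def b_def cnj_mult_self by (metis of_real_1 of_real_add of_real_eq_iff)
  have cd: "c + d = 1"
    using n2 unfolding c_def d_def cnj_mult_self by (metis of_real_1 of_real_add of_real_eq_iff)
  have "cmod (cnj \<beta> * \<delta>) = cmod (cnj \<alpha> * \<gamma>)" unfolding bd by simp
  then have bdac: "b * d = a * c"
    unfolding a_def b_def c_def d_def by (simp add: norm_mult power_mult_distrib[symmetric])
  have "cmod v2 = cmod (cnj \<alpha> * \<delta> - cnj \<beta> * \<gamma>)" unfolding v2_def by (simp add: norm_mult norm_minus_commute)
  then have "(cmod v1)\<^sup>2 + (cmod v2)\<^sup>2 = 2 * (cmod (cnj \<alpha> * \<delta>))\<^sup>2 + 2 * (cmod (cnj \<beta> * \<gamma>))\<^sup>2"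
    unfolding v1_def by (simp add: cmod_parallelogram)
  also have "\<dots> = 2 * (a * d) + 2 * (b * c)"
    unfolding a_def b_def c_def d_def by (simp add: norm_mult power_mult_distrib)
  finally have "(cmod v1)\<^sup>2 + (cmod v2)\<^sup>2 + (cmod v3)\<^sup>2 = 2 * (a * d) + 2 * (b * c) + 4 * (a * c)"
    unfolding v3_def a_def c_def by (simp add: norm_mult power_mult_distrib)
  also have "\<dots> = 2 * ((a + b) * (c + d))" using bdac by (simp add: algebra_simps)
  finally show "(cmod v1)\<^sup>2 + (cmod v2)\<^sup>2 + (cmod v3)\<^sup>2 = 2" using ab cd by simp
qed

definition transition_x :: "(nat \<Rightarrow> complex vec) \<Rightarrow> complex" where
  "transition_x a = cnj (a 0 $ 0) * a 1 $ 1 + cnj (a 0 $ 1) * a 1 $ 0"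

definition transition_y :: "(nat \<Rightarrow> complex vec) \<Rightarrow> complex" where
  "transition_y a = \<i> * (cnj (a 0 $ 1) * a 1 $ 0 - cnj (a 0 $ 0) * a 1 $ 1)"

definition transition_z :: "(nat \<Rightarrow> complex vec) \<Rightarrow> complex" where
  "transition_z a = 2 * (cnj (a 0 $ 0) * a 1 $ 0)"

lemma negativity_measured_bell_diag:
  fixes p0 p1 p2 p3 :: real
  assumes ob: "orthonormal_basis 2 a"
    and p: "p0 \<ge> 0" "p1 \<ge> 0" "p2 \<ge> 0" "p3 \<ge> 0" "p0 + p1 + p2 + p3 = 1"
  shows "negativity (2 * 2) 2 (measured_state 2 2 a (bell_diag_mat p0 p1 p2 p3)) =
    sqrt (off_block_weight (p0 - p3 + p1 - p2) (p1 - p2 - p0 + p3) (p0 + p3 - p1 - p2)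
      (transition_x a) (transition_y a) (transition_z a) / 16)"
proof -
  let ?X = "basis_entry a (bell_diag_mat p0 p1 p2 p3)"
  define A C B D where "A = (p0 + p3) / 2" and "C = (p1 + p2) / 2" and "B = (p0 - p3) / 2" and "D = (p1 - p2) / 2"
  note X = basis_entry_bell_diag_mat[of a p0 p1 p2 p3, folded A_def C_def B_def D_def]
  have AB: "\<bar>B\<bar> \<le> A" and CD: "\<bar>D\<bar> \<le> C" unfolding A_def B_def C_def D_def using p by auto
  note inner = orthonormal_basis_2_inner[OF ob]
  have n0: "cnj (a 0 $ 0) * a 0 $ 0 + cnj (a 0 $ 1) * a 0 $ 1 = 1" using inner[of 0 0] by simp
  have n1: "cnj (a 1 $ 0) * a 1 $ 0 + cnj (a 1 $ 1) * a 1 $ 1 = 1" using inner[of 1 1] by simp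
  have o: "cnj (a 0 $ 0) * a 1 $ 0 + cnj (a 0 $ 1) * a 1 $ 1 = 0" using inner[of 0 1] by simp
  have "trace_norm2 (?X 0 0) = A + C" by (rule trace_norm2_diag_block[OF n0 AB CD]; rule X)
  moreover have "trace_norm2 (?X 1 1) = A + C" by (rule trace_norm2_diag_block[OF n1 AB CD]; rule X)
  moreover have "trace_norm2 (?X 1 0) = trace_norm2 (?X 0 1)"
    by (rule trace_norm2_adjoint; simp add: X algebra_simps)
  moreover have "trace_norm2 (?X 0 1) = sqrt (off_block_weight (2 * (B + D)) (2 * (D - B)) (2 * (A - C))
      (transition_x a) (transition_y a) (transition_z a) / 16)"
    unfolding transition_x_def transition_y_def transition_z_def by (rule trace_norm2_off_block[OF o]; rule X)
  moreover have "2 * (B + D) = p0 - p3 + p1 - p2" "2 * (D - B) = p1 - p2 - p0 + p3" "2 * (A - C) = p0 + p3 - p1 - p2"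
    unfolding A_def C_def B_def D_def by (simp_all add: field_simps)
  moreover have "2 * (A + C) = 1" unfolding A_def C_def using p by (simp add: field_simps)
  moreover note trace_norm_ptrans_measured_state[OF ob bell_diag_mat_carrier, of p0 p1 p2 p3]
  ultimately show ?thesis unfolding negativity_def by simp
qed

section \<open>Optimising over the measurement basis\<close>

lemma norm_add3_ge:
  fixes w1 w2 w3 :: "'a :: real_normed_vector"
  shows "norm w1 - norm w2 - norm w3 \<le> norm (w1 + w2 + w3)"
proof -
  have "norm w1 = norm ((w1 + w2 + w3) - (w2 + w3))" by (simp add: algebra_simps)
  also have "\<dots> \<le> norm (w1 + w2 + w3) + norm (w2 + w3)" by (rule norm_triangle_ineq4)
  also have "\<dots> \<le> norm (w1 + w2 + w3) + (norm w2 + norm w3)" using norm_triangle_ineq[of w2 w3] by simp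
  finally show ?thesis by simp
qed

text \<open>With at most one negative weight \<open>d\<^sub>k\<close>, the reverse triangle inequality isolating the \<open>k\<close>-th
  term already gives nonnegativity.\<close>

lemma weighted_sq_norm_nonneg:
  fixes d1 d2 d3 :: real and v1 v2 v3 :: complex
  assumes "(0 \<le> d2 \<and> 0 \<le> d3) \<or> (0 \<le> d1 \<and> 0 \<le> d3) \<or> (0 \<le> d1 \<and> 0 \<le> d2)"
  shows "0 \<le> d1 * (cmod v1)\<^sup>2 + d2 * (cmod v2)\<^sup>2 + d3 * (cmod v3)\<^sup>2
           + cmod (of_real d1 * v1\<^sup>2 + of_real d2 * v2\<^sup>2 + of_real d3 * v3\<^sup>2)"
proof -
  define w1 w2 w3 where "w1 = of_real d1 * v1\<^sup>2" and "w2 = of_real d2 * v2\<^sup>2" and "w3 = of_real d3 * v3\<^sup>2"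
  have n: "cmod (of_real d * v\<^sup>2) = \<bar>d\<bar> * (cmod v)\<^sup>2" for d and v :: complex
    by (simp add: norm_mult norm_power)
  have low: "- (\<bar>d\<bar> * (cmod v)\<^sup>2) \<le> d * (cmod v)\<^sup>2" for d and v :: complex
    using abs_ge_minus_self[of "d * (cmod v)\<^sup>2"] by (simp add: abs_mult)
  have tri: "cmod w1 - cmod w2 - cmod w3 \<le> cmod (w1 + w2 + w3)"
    "cmod w2 - cmod w1 - cmod w3 \<le> cmod (w1 + w2 + w3)"
    "cmod w3 - cmod w1 - cmod w2 \<le> cmod (w1 + w2 + w3)"
    using norm_add3_ge[of w1 w2 w3] norm_add3_ge[of w2 w1 w3] norm_add3_ge[of w3 w1 w2]
    by (simp_all add: ac_simps)
  from assms consider "0 \<le> d2" "0 \<le> d3" | "0 \<le> d1" "0 \<le> d3" | "0 \<le> d1" "0 \<le> d2" by blast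
  then show ?thesis
  proof cases
    case 1
    then show ?thesis using tri(1) low[of d1 v1] unfolding w1_def w2_def w3_def n by simp
  next
    case 2
    then show ?thesis using tri(2) low[of d2 v2] unfolding w1_def w2_def w3_def n by simp
  next
    case 3
    then show ?thesis using tri(3) low[of d3 v3] unfolding w1_def w2_def w3_def n by simp
  qed
qed

text \<open>Using \<open>\<Sum> v\<^sub>i\<^sup>2 = 0\<close>, the weights \<open>c\<^sub>i\<^sup>2\<close> may be replaced by \<open>c\<^sub>i\<^sup>2 - m\<^sup>2\<close>.\<close>

lemma off_block_weight_ge:
  assumes m: "0 \<le> m" "m \<le> max \<bar>c1\<bar> \<bar>c2\<bar>" "m \<le> max \<bar>c2\<bar> \<bar>c3\<bar>" "m \<le> max \<bar>c1\<bar> \<bar>c3\<bar>"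
    and n: "(cmod v1)\<^sup>2 + (cmod v2)\<^sup>2 + (cmod v3)\<^sup>2 = 2" and s: "v1\<^sup>2 + v2\<^sup>2 + v3\<^sup>2 = 0"
  shows "4 * m\<^sup>2 \<le> off_block_weight c1 c2 c3 v1 v2 v3"
proof -
  define d1 d2 d3 where "d1 = c1\<^sup>2 - m\<^sup>2" and "d2 = c2\<^sup>2 - m\<^sup>2" and "d3 = c3\<^sup>2 - m\<^sup>2"
  have ge: "m \<le> \<bar>c\<bar> \<Longrightarrow> 0 \<le> c\<^sup>2 - m\<^sup>2" for c :: real
    using m(1) by (simp add: abs_le_square_iff[symmetric])
  have "m \<le> \<bar>c1\<bar> \<or> m \<le> \<bar>c2\<bar>" "m \<le> \<bar>c2\<bar> \<or> m \<le> \<bar>c3\<bar>" "m \<le> \<bar>c1\<bar> \<or> m \<le> \<bar>c3\<bar>"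
    using m(2-4) by (simp_all add: le_max_iff_disj)
  then have "(0 \<le> d2 \<and> 0 \<le> d3) \<or> (0 \<le> d1 \<and> 0 \<le> d3) \<or> (0 \<le> d1 \<and> 0 \<le> d2)"
    unfolding d1_def d2_def d3_def using ge by blast
  note nonneg = weighted_sq_norm_nonneg[OF this, of v1 v2 v3]
  have w: "c1\<^sup>2 * (cmod v1)\<^sup>2 + c2\<^sup>2 * (cmod v2)\<^sup>2 + c3\<^sup>2 * (cmod v3)\<^sup>2
      = d1 * (cmod v1)\<^sup>2 + d2 * (cmod v2)\<^sup>2 + d3 * (cmod v3)\<^sup>2 + m\<^sup>2 * ((cmod v1)\<^sup>2 + (cmod v2)\<^sup>2 + (cmod v3)\<^sup>2)"
    unfolding d1_def d2_def d3_def by (simp add: algebra_simps)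
  have z: "of_real (c1\<^sup>2) * v1\<^sup>2 + of_real (c2\<^sup>2) * v2\<^sup>2 + of_real (c3\<^sup>2) * v3\<^sup>2
      = of_real d1 * v1\<^sup>2 + of_real d2 * v2\<^sup>2 + of_real d3 * v3\<^sup>2 + of_real (m\<^sup>2) * (v1\<^sup>2 + v2\<^sup>2 + v3\<^sup>2)"
    unfolding d1_def d2_def d3_def by (simp add: algebra_simps)
  have "off_block_weight c1 c2 c3 v1 v2 v3 = 4 * m\<^sup>2 + 2 * (d1 * (cmod v1)\<^sup>2 + d2 * (cmod v2)\<^sup>2
      + d3 * (cmod v3)\<^sup>2 + cmod (of_real d1 * v1\<^sup>2 + of_real d2 * v2\<^sup>2 + of_real d3 * v3\<^sup>2))"
    unfolding off_block_weight_def w z n s by simp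
  then show ?thesis using nonneg by simp
qed

lemma negativity_measured_bell_diag_ge:
  fixes p0 p1 p2 p3 m :: real
  defines "c1 \<equiv> p0 - p3 + p1 - p2" and "c2 \<equiv> p1 - p2 - p0 + p3" and "c3 \<equiv> p0 + p3 - p1 - p2"
  assumes ob: "orthonormal_basis 2 a"
    and p: "p0 \<ge> 0" "p1 \<ge> 0" "p2 \<ge> 0" "p3 \<ge> 0" "p0 + p1 + p2 + p3 = 1"
    and m: "0 \<le> m" "m \<le> max \<bar>c1\<bar> \<bar>c2\<bar>" "m \<le> max \<bar>c2\<bar> \<bar>c3\<bar>" "m \<le> max \<bar>c1\<bar> \<bar>c3\<bar>"
  shows "m / 2 \<le> negativity (2 * 2) 2 (measured_state 2 2 a (bell_diag_mat p0 p1 p2 p3))"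
proof -
  note inner = orthonormal_basis_2_inner[OF ob]
  have n0: "cnj (a 0 $ 0) * a 0 $ 0 + cnj (a 0 $ 1) * a 0 $ 1 = 1" using inner[of 0 0] by simp
  have n1: "cnj (a 1 $ 0) * a 1 $ 0 + cnj (a 1 $ 1) * a 1 $ 1 = 1" using inner[of 1 1] by simp
  have o: "cnj (a 0 $ 0) * a 1 $ 0 + cnj (a 0 $ 1) * a 1 $ 1 = 0" using inner[of 0 1] by simp
  note v = transition_amplitudes_props[OF n0 n1 o, folded transition_x_def transition_y_def transition_z_def]
  have "m / 2 = sqrt (4 * m\<^sup>2 / 16)" using m(1) by (simp add: real_sqrt_divide)
  also have "\<dots> \<le> sqrt (off_block_weight c1 c2 c3 (transition_x a) (transition_y a) (transition_z a) / 16)"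
    using off_block_weight_ge[OF m v] by simp
  finally show ?thesis
    unfolding negativity_measured_bell_diag[OF ob p] c1_def c2_def c3_def .
qed


definition basis_z :: "nat \<Rightarrow> complex vec" where
  "basis_z k = (if k = 0 then vec_of_list [1, 0] else vec_of_list [0, 1])"

definition basis_x :: "nat \<Rightarrow> complex vec" where
  "basis_x k = (if k = 0 then vec_of_list [inv_sqrt2, inv_sqrt2] else vec_of_list [inv_sqrt2, - inv_sqrt2])"

definition basis_y :: "nat \<Rightarrow> complex vec" where
  "basis_y k = (if k = 0 then vec_of_list [inv_sqrt2, \<i> * inv_sqrt2] else vec_of_list [inv_sqrt2, - \<i> * inv_sqrt2])"

lemma basis_z_index: "basis_z 0 $ 0 = 1" "basis_z 0 $ 1 = 0" "basis_z 1 $ 0 = 0" "basis_z 1 $ 1 = 1"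
  "dim_vec (basis_z k) = 2"
  by (simp_all add: basis_z_def vec_index_vCons)

lemma basis_x_index: "basis_x 0 $ 0 = inv_sqrt2" "basis_x 0 $ 1 = inv_sqrt2" "basis_x 1 $ 0 = inv_sqrt2"
  "basis_x 1 $ 1 = - inv_sqrt2" "dim_vec (basis_x k) = 2"
  by (simp_all add: basis_x_def vec_index_vCons)

lemma basis_y_index: "basis_y 0 $ 0 = inv_sqrt2" "basis_y 0 $ 1 = \<i> * inv_sqrt2" "basis_y 1 $ 0 = inv_sqrt2"
  "basis_y 1 $ 1 = - \<i> * inv_sqrt2" "dim_vec (basis_y k) = 2"
  by (simp_all add: basis_y_def vec_index_vCons)

lemma all_less_2: "(\<forall>j :: nat. j < 2 \<longrightarrow> P j) = (P 0 \<and> P 1)"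
  by (auto simp: numeral_2_eq_2 less_Suc_eq One_nat_def)

lemma orthonormal_basis_eigenbases:
  "orthonormal_basis 2 basis_z" "orthonormal_basis 2 basis_x" "orthonormal_basis 2 basis_y"
  unfolding orthonormal_basis_def all_less_2 carrier_vec_def mem_Collect_eq basis_z_index(5) basis_x_index(5)
    basis_y_index(5) scalar_prod_def dim_vec_conjugate sum_0_upto_2
  by (simp_all add: basis_z_index basis_x_index basis_y_index inv_sqrt2_sq algebra_simps)

lemma transition_eigenbases:
  "transition_x basis_z = 1" "transition_y basis_z = - \<i>" "transition_z basis_z = 0"
  "transition_x basis_x = 0" "transition_y basis_x = \<i>" "transition_z basis_x = 1"
  "transition_x basis_y = - \<i>" "transition_y basis_y = 0" "transition_z basis_y = 1"
  by (simp_all add: transition_x_def transition_y_def transition_z_def basis_z_index basis_x_index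
      basis_y_index inv_sqrt2_sq algebra_simps)

lemma off_block_weight_eigenbases:
  "off_block_weight c1 c2 c3 (transition_x basis_z) (transition_y basis_z) (transition_z basis_z)
     = 2 * (c1\<^sup>2 + c2\<^sup>2) + 2 * \<bar>c2\<^sup>2 - c1\<^sup>2\<bar>"
  "off_block_weight c1 c2 c3 (transition_x basis_x) (transition_y basis_x) (transition_z basis_x)
     = 2 * (c2\<^sup>2 + c3\<^sup>2) + 2 * \<bar>c3\<^sup>2 - c2\<^sup>2\<bar>"
  "off_block_weight c1 c2 c3 (transition_x basis_y) (transition_y basis_y) (transition_z basis_y)
     = 2 * (c1\<^sup>2 + c3\<^sup>2) + 2 * \<bar>c3\<^sup>2 - c1\<^sup>2\<bar>"
proof -
  have d: "cmod ((complex_of_real x)\<^sup>2 - (complex_of_real y)\<^sup>2) = \<bar>x\<^sup>2 - y\<^sup>2\<bar>" for x y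
    by (metis norm_of_real of_real_diff of_real_power)
  have d': "cmod ((complex_of_real x)\<^sup>2 - (complex_of_real y)\<^sup>2) = \<bar>y\<^sup>2 - x\<^sup>2\<bar>" for x y
    by (metis d abs_minus_commute)
  show "off_block_weight c1 c2 c3 (transition_x basis_z) (transition_y basis_z) (transition_z basis_z)
     = 2 * (c1\<^sup>2 + c2\<^sup>2) + 2 * \<bar>c2\<^sup>2 - c1\<^sup>2\<bar>"
    unfolding off_block_weight_def transition_eigenbases by (simp add: power2_eq_square[of \<i>] d')
  show "off_block_weight c1 c2 c3 (transition_x basis_x) (transition_y basis_x) (transition_z basis_x)
     = 2 * (c2\<^sup>2 + c3\<^sup>2) + 2 * \<bar>c3\<^sup>2 - c2\<^sup>2\<bar>"
    unfolding off_block_weight_def transition_eigenbases by (simp add: power2_eq_square[of \<i>] d)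
  show "off_block_weight c1 c2 c3 (transition_x basis_y) (transition_y basis_y) (transition_z basis_y)
     = 2 * (c1\<^sup>2 + c3\<^sup>2) + 2 * \<bar>c3\<^sup>2 - c1\<^sup>2\<bar>"
    unfolding off_block_weight_def transition_eigenbases by (simp add: power2_eq_square[of \<i>] d)
qed

lemma sqrt_pair_weight_eq_max:
  fixes a b :: real
  shows "sqrt ((2 * (a\<^sup>2 + b\<^sup>2) + 2 * \<bar>b\<^sup>2 - a\<^sup>2\<bar>) / 16) = max \<bar>a\<bar> \<bar>b\<bar> / 2"
proof -
  have "(2 * (a\<^sup>2 + b\<^sup>2) + 2 * \<bar>b\<^sup>2 - a\<^sup>2\<bar>) / 16 = (max \<bar>a\<bar> \<bar>b\<bar> / 2)\<^sup>2"
    by (cases "\<bar>a\<bar> \<le> \<bar>b\<bar>") (auto simp: abs_le_square_iff power_divide max_def)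
  then show ?thesis by simp
qed

lemma negativity_measured_bell_diag_eigenbases:
  fixes p0 p1 p2 p3 :: real
  defines "c1 \<equiv> p0 - p3 + p1 - p2" and "c2 \<equiv> p1 - p2 - p0 + p3" and "c3 \<equiv> p0 + p3 - p1 - p2"
  assumes p: "p0 \<ge> 0" "p1 \<ge> 0" "p2 \<ge> 0" "p3 \<ge> 0" "p0 + p1 + p2 + p3 = 1"
  shows "negativity (2 * 2) 2 (measured_state 2 2 basis_z (bell_diag_mat p0 p1 p2 p3)) = max \<bar>c1\<bar> \<bar>c2\<bar> / 2"
    "negativity (2 * 2) 2 (measured_state 2 2 basis_x (bell_diag_mat p0 p1 p2 p3)) = max \<bar>c2\<bar> \<bar>c3\<bar> / 2"
    "negativity (2 * 2) 2 (measured_state 2 2 basis_y (bell_diag_mat p0 p1 p2 p3)) = max \<bar>c1\<bar> \<bar>c3\<bar> / 2"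
  unfolding negativity_measured_bell_diag[OF orthonormal_basis_eigenbases(1) p]
    negativity_measured_bell_diag[OF orthonormal_basis_eigenbases(2) p]
    negativity_measured_bell_diag[OF orthonormal_basis_eigenbases(3) p]
    off_block_weight_eigenbases sqrt_pair_weight_eq_max c1_def c2_def c3_def
  by (rule refl)+

lemma sorted3_median_eq:
  fixes x y z l1 l2 l3 :: "'a :: linorder"
  assumes "mset [l1, l2, l3] = mset [x, y, z]" "l1 \<le> l2" "l2 \<le> l3"
  shows "l2 = min (max x y) (min (max y z) (max x z))"
proof -
  have "sort [x, y, z] = [l1, l2, l3]"
    by (rule properties_for_sort) (use assms in auto)
  then show ?thesis using assms(2,3)
    by (cases "x \<le> y"; cases "y \<le> z"; cases "x \<le> z") (auto simp: min_def max_def)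
qed


theorem theorem11:
  fixes p0 p1 p2 p3 :: real and \<rho> :: "complex mat" and l1 l2 l3 :: real
  assumes "p0 \<ge> 0" "p1 \<ge> 0" "p2 \<ge> 0" "p3 \<ge> 0" "p0 + p1 + p2 + p3 = 1"
    and "\<rho> = complex_of_real p0 \<cdot>\<^sub>m ketbra phi_plus + complex_of_real p1 \<cdot>\<^sub>m ketbra psi_plus
           + complex_of_real p2 \<cdot>\<^sub>m ketbra psi_minus + complex_of_real p3 \<cdot>\<^sub>m ketbra phi_minus"
    and "mset [l1, l2, l3] = mset [cmod (corr \<rho> 1 1), cmod (corr \<rho> 2 2), cmod (corr \<rho> 3 3)]"
    and "l1 \<le> l2" "l2 \<le> l3"
  shows "QN_A 2 2 \<rho> = l2 / 2"
proof -
  define c1 c2 c3 where "c1 = p0 - p3 + p1 - p2" and "c2 = p1 - p2 - p0 + p3" and "c3 = p0 + p3 - p1 - p2"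
  have \<rho>: "\<rho> = bell_diag_mat p0 p1 p2 p3" using assms(6) bell_mixture_eq_bell_diag_mat by simp
  have "mset [l1, l2, l3] = mset [\<bar>c1\<bar>, \<bar>c2\<bar>, \<bar>c3\<bar>]"
    using assms(7) unfolding \<rho> corr_bell_diag_mat c1_def c2_def c3_def norm_of_real .
  then have l2: "l2 = min (max \<bar>c1\<bar> \<bar>c2\<bar>) (min (max \<bar>c2\<bar> \<bar>c3\<bar>) (max \<bar>c1\<bar> \<bar>c3\<bar>))"
    using sorted3_median_eq assms(8,9) by blast
  then have m: "0 \<le> l2" "l2 \<le> max \<bar>c1\<bar> \<bar>c2\<bar>" "l2 \<le> max \<bar>c2\<bar> \<bar>c3\<bar>" "l2 \<le> max \<bar>c1\<bar> \<bar>c3\<bar>"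
    by (simp_all add: min_def max_def)
  let ?N = "\<lambda>a. negativity (2 * 2) 2 (measured_state 2 2 a \<rho>)"
  have lower: "l2 / 2 \<le> ?N a" if "orthonormal_basis 2 a" for a
    unfolding \<rho> by (rule negativity_measured_bell_diag_ge[OF that assms(1-5) m[unfolded c1_def c2_def c3_def]])
  have "?N basis_z = max \<bar>c1\<bar> \<bar>c2\<bar> / 2" "?N basis_x = max \<bar>c2\<bar> \<bar>c3\<bar> / 2" "?N basis_y = max \<bar>c1\<bar> \<bar>c3\<bar> / 2"
    unfolding \<rho> c1_def c2_def c3_def by (fact negativity_measured_bell_diag_eigenbases[OF assms(1-5)])+
  then have "l2 / 2 \<in> {?N basis_z, ?N basis_x, ?N basis_y}"
    unfolding l2 by (simp add: min_def)
  then have "l2 / 2 \<in> {?N a | a. orthonormal_basis 2 a}"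
    using orthonormal_basis_eigenbases by blast
  then show ?thesis
    unfolding QN_A_def using lower by (intro cInf_eq_minimum) auto
qed

end
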